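(* Let $\Gamma=\sum_{j=1}^k w_j\delta_{\mu_j}$ be a $k$-atomic distribution on $\mathbb R^d$, and let $\Sigma=\mathbb E_{U\sim\Gamma}[UU^\top]=\sum_{j=1}^k w_j\mu_j\mu_j^\top$ with eigenvalues $\lambda_1\ge\dots\ge\lambda_d$. Let $\Sigma'$ be any symmetric $d\times d$ matrix and $\Pi'_r$ the orthogonal projection matrix onto the span of the top $r$ eigenvectors of $\Sigma'$. Then $$W_2^2(\Gamma,\Gamma_{\Pi'_r})\le k\big(\lambda_{r+1}+2\|\Sigma-\Sigma'\|_2\big).$$
   Context: For a $d\times d$ matrix $A$, $\Gamma_A$ denotes the law of $AU$ with $U\sim\Gamma$. $\|\cdot\|_2$ of a matrix is the spectral (operator) norm. $W_2(\Gamma,\Gamma')=(\inf\mathbb E\|U-U'\|_2^2)^{1/2}$ over couplings. Set $\lambda_{d+1}=0$ if $r=d$. *)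

theory Defs
  imports "HOL-Analysis.Analysis" "HOL-Probability.Probability"
begin

definition outer :: "real^'n \<Rightarrow> real^'n \<Rightarrow> real^'n^'n" where
  "outer u v = (\<chi> i j. u $ i * v $ j)"

definition push_mat :: "real^'n^'n \<Rightarrow> (real^'n) pmf \<Rightarrow> (real^'n) pmf" where
  "push_mat A G = map_pmf (\<lambda>u. A *v u) G"

text \<open>2-Wasserstein distance between (discrete) distributions; couplings of
 discrete distributions are themselves discrete, so couplings are pmfs on pairs.\<close>
definition W2 :: "(real^'n) pmf \<Rightarrow> (real^'n) pmf \<Rightarrow> real" where
  "W2 p q = sqrt (Inf ((\<lambda>c. measure_pmf.expectation c (\<lambda>(x,y). (norm (x - y))\<^sup>2)) `
             {c. map_pmf fst c = p \<and> map_pmf snd c = q}))"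

definition sorted_eigenbasis :: "real^'n^'n \<Rightarrow> (nat \<Rightarrow> real) \<Rightarrow> (nat \<Rightarrow> real^'n) \<Rightarrow> bool" where
  "sorted_eigenbasis A lam v \<longleftrightarrow>
     (\<forall>i<CARD('n). \<forall>j<CARD('n). v i \<bullet> v j = (if i = j then 1 else 0)) \<and>
     (\<forall>i<CARD('n). A *v v i = lam i *\<^sub>R v i) \<and>
     (\<forall>i j. i \<le> j \<longrightarrow> j < CARD('n) \<longrightarrow> lam j \<le> lam i)"

definition sorted_eigenvalues :: "real^'n^'n \<Rightarrow> (nat \<Rightarrow> real) \<Rightarrow> bool" where
  "sorted_eigenvalues A lam \<longleftrightarrow> (\<exists>v. sorted_eigenbasis A lam v)"

end

theory Submission
  imports Defs
begin

text \<open>For an atom \<open>a\<close> of \<open>\<Gamma>\<close> with weight \<open>w\<close>, the residual \<open>y = a - \<Pi>'\<^sub>r a\<close> is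
  orthogonal to the top \<open>r\<close> eigenvectors of \<open>\<Sigma>'\<close> and satisfies \<open>a \<bullet> y = \<parallel>y\<parallel>\<^sup>2\<close>. Since
  \<open>\<Sigma> \<succeq> w a a\<^sup>T\<close>, we get \<open>w \<parallel>y\<parallel>\<^sup>4 = w (a \<bullet> y)\<^sup>2 \<le> y\<^sup>T \<Sigma> y \<le> y\<^sup>T \<Sigma>' y + \<epsilon> \<parallel>y\<parallel>\<^sup>2 \<le> (\<lambda>'\<^sub>r\<^sub>+\<^sub>1 + \<epsilon>) \<parallel>y\<parallel>\<^sup>2\<close>
  with \<open>\<epsilon> = \<parallel>\<Sigma> - \<Sigma>'\<parallel>\<^sub>2\<close>, and Weyl's inequality \<open>\<lambda>'\<^sub>r\<^sub>+\<^sub>1 \<le> \<lambda>\<^sub>r\<^sub>+\<^sub>1 + \<epsilon>\<close> gives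
  \<open>w \<parallel>y\<parallel>\<^sup>2 \<le> \<lambda>\<^sub>r\<^sub>+\<^sub>1 + 2\<epsilon>\<close>. Coupling \<open>U\<close> with \<open>\<Pi>'\<^sub>r U\<close> and summing over the at most \<open>k\<close>
  atoms bounds \<open>W\<^sub>2\<^sup>2\<close>. Eigenvalues are indexed from 0, so \<open>\<lambda>\<^sub>r\<^sub>+\<^sub>1\<close> is \<open>lam r\<close>.\<close>

definition orthonormal_upto :: "nat \<Rightarrow> (nat \<Rightarrow> 'a::real_inner) \<Rightarrow> bool" where
  "orthonormal_upto n e \<longleftrightarrow> (\<forall>i<n. \<forall>j<n. e i \<bullet> e j = (if i = j then 1 else 0))"

lemma orthonormal_upto_mono: "orthonormal_upto n e \<Longrightarrow> m \<le> n \<Longrightarrow> orthonormal_upto m e"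
  by (auto simp: orthonormal_upto_def)

lemma orthonormal_upto_inner_sum:
  assumes "orthonormal_upto n e" "j < n"
  shows "(\<Sum>i<n. c i *\<^sub>R e i) \<bullet> e j = c j"
proof -
  have "(\<Sum>i<n. c i *\<^sub>R e i) \<bullet> e j = (\<Sum>i<n. c i * (e i \<bullet> e j))"
    by (simp add: inner_sum_left)
  also have "\<dots> = (\<Sum>i<n. if i = j then c j else 0)"
    using assms unfolding orthonormal_upto_def by (intro sum.cong) auto
  finally show ?thesis using assms(2) by simp
qed

lemma orthonormal_upto_DIM_expansion:
  fixes e :: "nat \<Rightarrow> 'a::euclidean_space"
  assumes e: "orthonormal_upto DIM('a) e"
  shows "x = (\<Sum>i<DIM('a). (x \<bullet> e i) *\<^sub>R e i)"
proof -
  let ?B = "e ` {..<DIM('a)}"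
  have "inj_on e {..<DIM('a)}"
    using e unfolding orthonormal_upto_def by (intro inj_onI) (metis lessThan_iff zero_neq_one)
  then have "dim (UNIV :: 'a set) \<le> card ?B"
    by (simp add: card_image)
  moreover have "independent ?B"
    using e unfolding orthonormal_upto_def
    by (intro pairwise_orthogonal_independent) (force simp: pairwise_def orthogonal_def)+
  ultimately have span: "UNIV \<subseteq> span ?B"
    by (intro card_ge_dim_independent) auto
  define y where "y = x - (\<Sum>i<DIM('a). (x \<bullet> e i) *\<^sub>R e i)"
  have "y \<bullet> e j = 0" if "j < DIM('a)" for j
    using orthonormal_upto_inner_sum[OF e that] by (simp add: y_def inner_diff_left)
  then have "orthogonal y y"
    using span by (intro orthogonal_to_span[of y]) (auto simp: orthogonal_def)
  then show ?thesis unfolding y_def by (simp add: orthogonal_self)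
qed

lemma sorted_eigenbasis_orthonormal:
  fixes A :: "real^'n^'n"
  shows "sorted_eigenbasis A lam v \<Longrightarrow> orthonormal_upto CARD('n) v"
  by (simp add: sorted_eigenbasis_def orthonormal_upto_def)

lemma sorted_eigenbasis_expansion:
  fixes A :: "real^'n^'n"
  assumes "sorted_eigenbasis A lam v"
  shows "x = (\<Sum>i<CARD('n). (x \<bullet> v i) *\<^sub>R v i)"
  using orthonormal_upto_DIM_expansion[of v x] sorted_eigenbasis_orthonormal[OF assms] by simp

lemma sorted_eigenbasis_inner_self:
  fixes A :: "real^'n^'n"
  assumes "sorted_eigenbasis A lam v"
  shows "x \<bullet> x = (\<Sum>i<CARD('n). (x \<bullet> v i)\<^sup>2)"
proof -
  have "x \<bullet> x = x \<bullet> (\<Sum>i<CARD('n). (x \<bullet> v i) *\<^sub>R v i)"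
    using sorted_eigenbasis_expansion[OF assms] by metis
  then show ?thesis by (simp add: inner_sum_right power2_eq_square)
qed

lemma sorted_eigenbasis_quadratic_form:
  fixes A :: "real^'n^'n"
  assumes "sorted_eigenbasis A lam v"
  shows "x \<bullet> (A *v x) = (\<Sum>i<CARD('n). lam i * (x \<bullet> v i)\<^sup>2)"
proof -
  have "A *v x = A *v (\<Sum>i<CARD('n). (x \<bullet> v i) *\<^sub>R v i)"
    using sorted_eigenbasis_expansion[OF assms] by metis
  also have "\<dots> = (\<Sum>i<CARD('n). (x \<bullet> v i) *\<^sub>R (A *v v i))"
    by (simp add: linear_sum[OF matrix_vector_mul_linear] linear_scale[OF matrix_vector_mul_linear])
  also have "\<dots> = (\<Sum>i<CARD('n). (x \<bullet> v i * lam i) *\<^sub>R v i)"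
    using assms unfolding sorted_eigenbasis_def by (intro sum.cong) auto
  finally show ?thesis
    by (simp add: inner_sum_right power2_eq_square mult_ac)
qed

lemma quadratic_form_le_if_orthogonal_to_top:
  fixes A :: "real^'n^'n"
  assumes v: "sorted_eigenbasis A lam v" and "r < CARD('n)"
    and orth: "\<And>i. i < r \<Longrightarrow> x \<bullet> v i = 0"
  shows "x \<bullet> (A *v x) \<le> lam r * (x \<bullet> x)"
proof -
  have "lam i * (x \<bullet> v i)\<^sup>2 \<le> lam r * (x \<bullet> v i)\<^sup>2" if "i < CARD('n)" for i
  proof (cases "i < r")
    case False
    then have "lam i \<le> lam r" using v that unfolding sorted_eigenbasis_def by simp
    then show ?thesis by (intro mult_right_mono) auto
  qed (simp add: orth)
  then show ?thesis
    unfolding sorted_eigenbasis_quadratic_form[OF v] sorted_eigenbasis_inner_self[OF v]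
    by (auto simp: sum_distrib_left intro!: sum_mono)
qed

lemma quadratic_form_ge_if_orthogonal_to_bottom:
  fixes A :: "real^'n^'n"
  assumes v: "sorted_eigenbasis A lam v" and "r < CARD('n)"
    and orth: "\<And>i. r < i \<Longrightarrow> i < CARD('n) \<Longrightarrow> x \<bullet> v i = 0"
  shows "lam r * (x \<bullet> x) \<le> x \<bullet> (A *v x)"
proof -
  have "lam r * (x \<bullet> v i)\<^sup>2 \<le> lam i * (x \<bullet> v i)\<^sup>2" if "i < CARD('n)" for i
  proof (cases "r < i")
    case False
    then have "lam r \<le> lam i" using v \<open>r < CARD('n)\<close> unfolding sorted_eigenbasis_def by simp
    then show ?thesis by (intro mult_right_mono) auto
  qed (simp add: orth that)
  then show ?thesis
    unfolding sorted_eigenbasis_quadratic_form[OF v] sorted_eigenbasis_inner_self[OF v]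
    by (auto simp: sum_distrib_left intro!: sum_mono)
qed

lemma quadratic_form_diff_le_onorm:
  fixes A B :: "real^'n^'n"
  shows "\<bar>x \<bullet> (A *v x) - x \<bullet> (B *v x)\<bar> \<le> onorm (\<lambda>x. (A - B) *v x) * (x \<bullet> x)"
proof -
  have bl: "bounded_linear (\<lambda>x. (A - B) *v x)"
    using matrix_vector_mul_linear linear_conv_bounded_linear by blast
  have "\<bar>x \<bullet> ((A - B) *v x)\<bar> \<le> norm x * norm ((A - B) *v x)"
    by (rule Cauchy_Schwarz_ineq2)
  also have "\<dots> \<le> norm x * (onorm (\<lambda>x. (A - B) *v x) * norm x)"
    by (intro mult_left_mono onorm[OF bl]) auto
  finally show ?thesis
    by (simp add: matrix_vector_mult_diff_rdistrib inner_diff_right dot_square_norm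
        power2_eq_square mult_ac)
qed

text \<open>Weyl's inequality: fewer than \<open>d\<close> vectors, the top \<open>r\<close> eigenvectors of \<open>A\<close> and those of
  \<open>B\<close> with index above \<open>r\<close>, leave a nonzero vector orthogonal to all of them.\<close>

lemma weyl_eigenvalue_le:
  fixes A B :: "real^'n^'n"
  assumes v: "sorted_eigenbasis A lam v" and w: "sorted_eigenbasis B mu w"
    and r: "r < CARD('n)"
  shows "mu r \<le> lam r + onorm (\<lambda>x. (A - B) *v x)"
proof -
  define W where "W = v ` {..<r} \<union> w ` {r<..<CARD('n)}"
  have "card W \<le> card (v ` {..<r}) + card (w ` {r<..<CARD('n)})"
    unfolding W_def by (rule card_Un_le)
  also have "\<dots> \<le> r + (CARD('n) - Suc r)"
    by (intro add_mono card_image_le[THEN order_trans]) auto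
  finally have "card W < CARD('n)"
    using r by linarith
  moreover have "dim W \<le> card W"
    by (intro dim_le_card) (auto simp: W_def intro: span_base)
  ultimately have "dim W < DIM(real^'n)"
    by simp
  then obtain x :: "real^'n" where "x \<noteq> 0" and x: "\<And>y. y \<in> span W \<Longrightarrow> orthogonal x y"
    by (rule orthogonal_to_subspace_exists) blast+
  have "x \<bullet> u = 0" if "u \<in> W" for u
    using x[OF span_base[OF that]] by (simp add: orthogonal_def)
  then have "mu r * (x \<bullet> x) \<le> x \<bullet> (B *v x)" and "x \<bullet> (A *v x) \<le> lam r * (x \<bullet> x)"
    by (intro quadratic_form_ge_if_orthogonal_to_bottom[OF w r]
        quadratic_form_le_if_orthogonal_to_top[OF v r]; simp add: W_def)+
  then have "mu r * (x \<bullet> x) \<le> (lam r + onorm (\<lambda>x. (A - B) *v x)) * (x \<bullet> x)"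
    using quadratic_form_diff_le_onorm[of x A B] by (simp add: algebra_simps)
  then show ?thesis using \<open>x \<noteq> 0\<close> by simp
qed

lemma sorted_eigenvalue_nonneg:
  fixes A :: "real^'n^'n"
  assumes v: "sorted_eigenbasis A lam v" and psd: "\<And>y. 0 \<le> y \<bullet> (A *v y)"
    and "r < CARD('n)"
  shows "0 \<le> lam r"
proof -
  have "v r \<bullet> (A *v v r) = lam r"
    using v assms(3) unfolding sorted_eigenbasis_def by simp
  then show ?thesis using psd by metis
qed

lemma outer_mult_vector: "outer u u *v y = (u \<bullet> y) *\<^sub>R u"
  by (simp add: vec_eq_iff outer_def matrix_vector_mult_def inner_vec_def sum_distrib_left mult_ac)

lemma sum_matrix_vector_mult:
  fixes f :: "'a \<Rightarrow> real^'n^'m"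
  shows "(\<Sum>a\<in>S. f a) *v y = (\<Sum>a\<in>S. f a *v y)"
  by (simp add: vec_eq_iff matrix_vector_mult_def sum_component sum_distrib_right sum.swap[of _ S])

lemma sorted_eigenbasis_projection_eq_id:
  fixes A :: "real^'n^'n"
  assumes "sorted_eigenbasis A lam v"
  shows "(\<Sum>i<CARD('n). outer (v i) (v i)) *v x = x"
  using sorted_eigenbasis_expansion[OF assms, of x]
  by (simp add: sum_matrix_vector_mult outer_mult_vector inner_commute)

lemma projection_residual_orthogonal:
  assumes e: "orthonormal_upto r e" and "j < r"
  shows "(x - (\<Sum>i<r. outer (e i) (e i)) *v x) \<bullet> e j = 0"
  using orthonormal_upto_inner_sum[OF e \<open>j < r\<close>, of "\<lambda>i. e i \<bullet> x"]
  by (simp add: sum_matrix_vector_mult outer_mult_vector inner_diff_left inner_commute[of x "e j"])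

lemma inner_projection_residual:
  fixes e :: "nat \<Rightarrow> real^'n" and x :: "real^'n"
  assumes e: "orthonormal_upto r e"
  defines "y \<equiv> x - (\<Sum>i<r. outer (e i) (e i)) *v x"
  shows "x \<bullet> y = y \<bullet> y"
proof -
  have "(x - y) \<bullet> y = (\<Sum>i<r. (e i \<bullet> x) * (e i \<bullet> y))"
    by (simp add: y_def sum_matrix_vector_mult outer_mult_vector inner_sum_left)
  also have "\<dots> = 0"
    using projection_residual_orthogonal[OF e] by (simp add: y_def inner_commute)
  finally show ?thesis by (simp add: inner_diff_left)
qed

lemma second_moment_quadratic_form:
  fixes \<Gamma> :: "(real^'n) pmf"
  assumes "finite (set_pmf \<Gamma>)"
  shows "y \<bullet> (measure_pmf.expectation \<Gamma> (\<lambda>u. outer u u) *v y)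
           = (\<Sum>a\<in>set_pmf \<Gamma>. pmf \<Gamma> a * (a \<bullet> y)\<^sup>2)"
proof -
  have "measure_pmf.expectation \<Gamma> (\<lambda>u. outer u u) = (\<Sum>a\<in>set_pmf \<Gamma>. pmf \<Gamma> a *\<^sub>R outer a a)"
    using assms by (rule integral_measure_pmf) auto
  then show ?thesis
    by (simp add: sum_matrix_vector_mult outer_mult_vector inner_sum_right
        flip: scaleR_matrix_vector_assoc) (simp add: power2_eq_square inner_commute mult_ac)
qed

lemma weighted_projection_residual_le:
  fixes \<Gamma> :: "(real^'d) pmf" and \<Sigma>' :: "real^'d^'d"
  defines "\<Sigma> \<equiv> measure_pmf.expectation \<Gamma> (\<lambda>u. outer u u)"
  assumes fin: "finite (set_pmf \<Gamma>)" and a: "a \<in> set_pmf \<Gamma>"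
    and v: "sorted_eigenbasis \<Sigma> lam v" and v': "sorted_eigenbasis \<Sigma>' lam' v'"
    and r: "r < CARD('d)"
  shows "pmf \<Gamma> a * (norm (a - (\<Sum>i<r. outer (v' i) (v' i)) *v a))\<^sup>2
           \<le> lam r + 2 * onorm (\<lambda>x. (\<Sigma> - \<Sigma>') *v x)"
proof -
  define y where "y = a - (\<Sum>i<r. outer (v' i) (v' i)) *v a"
  define \<epsilon> where "\<epsilon> = onorm (\<lambda>x. (\<Sigma> - \<Sigma>') *v x)"
  have e: "orthonormal_upto r v'"
    using orthonormal_upto_mono[OF sorted_eigenbasis_orthonormal[OF v']] r by simp
  have psd: "0 \<le> x \<bullet> (\<Sigma> *v x)" for x
    unfolding \<Sigma>_def second_moment_quadratic_form[OF fin] by (simp add: sum_nonneg)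
  have bound_nonneg: "0 \<le> lam r + 2 * \<epsilon>"
    using sorted_eigenvalue_nonneg[OF v psd r] onorm_pos_le[of "\<lambda>x. (\<Sigma> - \<Sigma>') *v x"]
      matrix_vector_mul_linear linear_conv_bounded_linear by (fastforce simp: \<epsilon>_def)
  have "pmf \<Gamma> a * (y \<bullet> y)\<^sup>2 = pmf \<Gamma> a * (a \<bullet> y)\<^sup>2"
    using inner_projection_residual[OF e] by (simp add: y_def)
  also have "\<dots> \<le> y \<bullet> (\<Sigma> *v y)"
    unfolding \<Sigma>_def second_moment_quadratic_form[OF fin] using fin a
    by (intro member_le_sum) auto
  also have "\<dots> \<le> y \<bullet> (\<Sigma>' *v y) + \<epsilon> * (y \<bullet> y)"
    using quadratic_form_diff_le_onorm[of y \<Sigma> \<Sigma>'] by (simp add: \<epsilon>_def)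
  also have "y \<bullet> (\<Sigma>' *v y) \<le> lam' r * (y \<bullet> y)"
    using projection_residual_orthogonal[OF e]
    by (intro quadratic_form_le_if_orthogonal_to_top[OF v' r]) (simp add: y_def)
  also have "lam' r * (y \<bullet> y) + \<epsilon> * (y \<bullet> y) \<le> (lam r + 2 * \<epsilon>) * (y \<bullet> y)"
    using mult_right_mono[OF weyl_eigenvalue_le[OF v v' r] inner_ge_zero[of y]]
    by (simp add: \<epsilon>_def algebra_simps)
  finally have "(pmf \<Gamma> a * (y \<bullet> y)) * (y \<bullet> y) \<le> (lam r + 2 * \<epsilon>) * (y \<bullet> y)"
    by (simp add: power2_eq_square mult_ac)
  then have "pmf \<Gamma> a * (y \<bullet> y) \<le> lam r + 2 * \<epsilon>"
    using bound_nonneg by (cases "y = 0") auto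
  then show ?thesis by (simp add: y_def \<epsilon>_def dot_square_norm)
qed

lemma W2_square_le_coupling:
  assumes "map_pmf fst c = p" "map_pmf snd c = q"
  shows "(W2 p q)\<^sup>2 \<le> measure_pmf.expectation c (\<lambda>(x, y). (norm (x - y))\<^sup>2)"
proof -
  let ?cost = "\<lambda>c. measure_pmf.expectation c (\<lambda>(x::real^'n, y). (norm (x - y))\<^sup>2)"
  let ?C = "{c. map_pmf fst c = p \<and> map_pmf snd c = q}"
  have nonneg: "0 \<le> ?cost c'" for c'
    by (intro Bochner_Integration.integral_nonneg) (auto split: prod.splits)
  have "c \<in> ?C" using assms by simp
  then have "0 \<le> Inf (?cost ` ?C)" and "Inf (?cost ` ?C) \<le> ?cost c"
    using nonneg by (auto intro!: cInf_greatest cInf_lower bdd_belowI[where m = 0])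
  then show ?thesis by (simp add: W2_def)
qed

lemma W2_push_mat_square_le:
  "(W2 \<Gamma> (push_mat A \<Gamma>))\<^sup>2 \<le> measure_pmf.expectation \<Gamma> (\<lambda>u. (norm (u - A *v u))\<^sup>2)"
  using W2_square_le_coupling[of "map_pmf (\<lambda>u. (u, A *v u)) \<Gamma>" \<Gamma> "push_mat A \<Gamma>"]
  by (simp add: push_mat_def map_pmf_comp)

theorem mainTheorem5:
  fixes \<Gamma> :: "(real^'d) pmf" and k r :: nat
    and \<Sigma> \<Sigma>' :: "real^'d^'d"
    and lam lam' :: "nat \<Rightarrow> real" and v' :: "nat \<Rightarrow> real^'d"
  assumes katomic: "finite (set_pmf \<Gamma>)" "card (set_pmf \<Gamma>) \<le> k"
    and Sigma: "\<Sigma> = measure_pmf.expectation \<Gamma> (\<lambda>u. outer u u)"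
    and eig: "sorted_eigenvalues \<Sigma> lam"
    and sym: "transpose \<Sigma>' = \<Sigma>'"
    and eig': "sorted_eigenbasis \<Sigma>' lam' v'"
    and r: "1 \<le> r" "r \<le> CARD('d)"
  shows "(W2 \<Gamma> (push_mat (\<Sum>i<r. outer (v' i) (v' i)) \<Gamma>))\<^sup>2
           \<le> real k * ((if r < CARD('d) then lam r else 0)
                       + 2 * onorm (\<lambda>x. (\<Sigma> - \<Sigma>') *v x))"
proof -
  define P where "P = (\<Sum>i<r. outer (v' i) (v' i))"
  define T where "T = (if r < CARD('d) then lam r else 0) + 2 * onorm (\<lambda>x. (\<Sigma> - \<Sigma>') *v x)"
  obtain v where v: "sorted_eigenbasis \<Sigma> lam v"
    using eig unfolding sorted_eigenvalues_def by blast
  have atom: "pmf \<Gamma> a * (norm (a - P *v a))\<^sup>2 \<le> T" if a: "a \<in> set_pmf \<Gamma>" for a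
  proof (cases "r < CARD('d)")
    case True
    then show ?thesis
      using weighted_projection_residual_le[OF katomic(1) a v[unfolded Sigma] eig' True]
      by (simp add: P_def T_def Sigma)
  next
    case False
    then have "P *v a = a"
      using r sorted_eigenbasis_projection_eq_id[OF eig'] by (simp add: P_def)
    then show ?thesis
      using False matrix_vector_mul_linear linear_conv_bounded_linear
      by (simp add: T_def onorm_pos_le)
  qed
  have "(W2 \<Gamma> (push_mat P \<Gamma>))\<^sup>2 \<le> measure_pmf.expectation \<Gamma> (\<lambda>u. (norm (u - P *v u))\<^sup>2)"
    by (rule W2_push_mat_square_le)
  also have "\<dots> = (\<Sum>a\<in>set_pmf \<Gamma>. pmf \<Gamma> a * (norm (a - P *v a))\<^sup>2)"
    using katomic(1) by (subst integral_measure_pmf_real) (auto simp: mult.commute)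
  also have "\<dots> \<le> card (set_pmf \<Gamma>) * T"
    using sum_mono[OF atom] by simp
  also have "\<dots> \<le> k * T"
  proof (rule mult_right_mono)
    obtain a where "a \<in> set_pmf \<Gamma>" by (metis all_not_in_conv set_pmf_not_empty)
    then show "0 \<le> T"
      using order_trans[OF mult_nonneg_nonneg[OF pmf_nonneg zero_le_power2] atom] by blast
  qed (use katomic(2) in simp)
  finally show ?thesis unfolding P_def T_def .
qed

end
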